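(* For every fixed positive integer $c$, and for every positive integer $k$ large enough compared to $c$, there exists a tournament $T$ on $2k+c$ vertices such that $\mathrm{sinv}'_k(T) > \frac{1}{2}\log(2k+c) - \log(2c)$. In particular, for every fixed positive integer $c$, $m'_k(2k+c)$ is unbounded as $k\to\infty$.
   Context: Logarithms are to base 2. A tournament is an orientation of a complete graph. For a digraph $D$ and $X \subseteq V(D)$, inverting $X$ means reversing the direction of every arc of $D$ with both endvertices in $X$. A digraph $D$ is $k$-arc-strong if for every partition $(V_1,V_2)$ of $V(D)$ into nonempty sets there are at least $k$ arcs from $V_1$ to $V_2$. $\mathrm{sinv}'_k(D)$ is the minimum number of sets whose successive inversion transforms $D$ into a $k$-arc-strong digraph. For $n\ge 2k+1$, $m'_k(n)=\max\{\mathrm{sinv}'_k(T): T \text{ tournament of order } n\}$. *)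

theory Defs
  imports Complex_Main
begin

definition tournament :: "'a set \<Rightarrow> ('a \<times> 'a) set \<Rightarrow> bool" where
  "tournament V A \<longleftrightarrow> finite V \<and> A \<subseteq> V \<times> V \<and> (\<forall>v. (v, v) \<notin> A) \<and>
     (\<forall>u\<in>V. \<forall>v\<in>V. u \<noteq> v \<longrightarrow> ((u, v) \<in> A \<longleftrightarrow> (v, u) \<notin> A))"

definition invert :: "('a \<times> 'a) set \<Rightarrow> 'a set \<Rightarrow> ('a \<times> 'a) set" where
  "invert A X = {(u, v) \<in> A. \<not> (u \<in> X \<and> v \<in> X)} \<union> {(v, u) | u v. (u, v) \<in> A \<and> u \<in> X \<and> v \<in> X}"

definition arc_strong :: "nat \<Rightarrow> 'a set \<Rightarrow> ('a \<times> 'a) set \<Rightarrow> bool" where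
  "arc_strong k V A \<longleftrightarrow> (\<forall>V1. V1 \<subseteq> V \<and> V1 \<noteq> {} \<and> V1 \<noteq> V \<longrightarrow>
       card {(u, v) \<in> A. u \<in> V1 \<and> v \<in> V - V1} \<ge> k)"

definition sinv' :: "nat \<Rightarrow> 'a set \<Rightarrow> ('a \<times> 'a) set \<Rightarrow> nat" where
  "sinv' k V A = (LEAST m. \<exists>Xs. length Xs = m \<and> set Xs \<subseteq> Pow V \<and> arc_strong k V (foldl invert A Xs))"

text \<open>m'_k(n): maximum over tournaments of order n (vertex set {0..<n} w.l.o.g.).\<close>
definition m' :: "nat \<Rightarrow> nat \<Rightarrow> nat" where
  "m' k n = Max {sinv' k {0..<n} A | A. tournament {0..<n} A}"

end

theory Submission
  imports Defs
begin

(* If sinv'_k(T) <= t, then T arises from a k-arc-strong tournament on n = 2k + c vertices by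
   inverting t sets (inversion is an involution), so there are at most
   (number of k-arc-strong tournaments) * 2^(n t) such T.  In a k-arc-strong tournament on
   2k + c vertices every out-degree lies in [k, k + c), and adding the vertices one at a time
   shows that at most prod_{m<n} c * binom(m, m div 2) tournaments have all out-degrees in
   windows of size c.  As binom(m, m div 2)^2 (m + 1) <= 4^m and n^n < 4^n n!, this total is
   below the number 2^(n choose 2) of all tournaments once (2 c 2^t)^2 <= n, which is the
   logarithmic bound.  Finiteness of sinv' comes from a near-regular interval tournament,
   which is ((n - 1) div 2)-arc-strong and reachable from any tournament by inverting pairs. *)

section \<open>Binomial and factorial estimates\<close>

lemma central_binomial_even_bound: "((2 * r) choose r)^2 * (2 * r + 1) \<le> (16::nat) ^ r"
proof (induction r)
  case 0
  then show ?case by simp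
next
  case (Suc r)
  define a where "a = (2 * r) choose r"
  define m where "m = (2 * r + 1) choose r"
  have "(r + 1) * ((2 * r + 2) choose (r + 1)) = (r + 1) * (2 * m)"
    using Suc_times_binomial[of r "2 * r + 1"] by (simp add: m_def del: binomial_Suc_Suc)
  then have next_central: "(2 * r + 2) choose (r + 1) = 2 * m"
    by (simp only: mult_left_cancel)
  have "(r + 1) * m = (r + 1) * ((2 * r + 1) choose (r + 1))"
    using binomial_symmetric[of r "2 * r + 1"] by (simp add: m_def)
  also have "\<dots> = (2 * r + 1) * a"
    using Suc_times_binomial_eq[of "2 * r" r] by (simp add: a_def mult.commute del: binomial_Suc_Suc)
  finally have m_rec: "(r + 1) * m = (2 * r + 1) * a" .
  have "(r + 1)^2 * ((2 * m)^2 * (2 * r + 3)) = 4 * ((r + 1) * m)^2 * (2 * r + 3)"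
    by (simp add: power2_eq_square algebra_simps)
  also have "\<dots> = 4 * (a^2 * (2 * r + 1)) * ((2 * r + 1) * (2 * r + 3))"
    unfolding m_rec by (simp add: power2_eq_square algebra_simps)
  also have "\<dots> \<le> 4 * 16^r * ((r + 1)^2 * 4)"
    by (rule mult_mono) (use Suc.IH in \<open>simp_all add: a_def power2_eq_square algebra_simps\<close>)
  also have "\<dots> = (r + 1)^2 * 16 ^ Suc r"
    by simp
  finally have "(2 * m)^2 * (2 * r + 3) \<le> 16 ^ Suc r"
    by (simp only: mult_le_cancel1) simp
  then show ?case using next_central by (simp add: algebra_simps)
qed

lemma central_binomial_bound: "(n choose (n div 2))^2 * (n + 1) \<le> (4::nat) ^ n"
proof (cases "even n")
  case True
  then obtain r where "n = 2 * r" by blast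
  then show ?thesis using central_binomial_even_bound[of r] by (simp add: power_mult)
next
  case False
  then obtain r where n: "n = 2 * r + 1" using oddE by blast
  define a where "a = (2 * r) choose r"
  define C where "C = n choose (n div 2)"
  have "(r + 1) * C = (r + 1) * ((2 * r + 1) choose (r + 1))"
    using binomial_symmetric[of r "2 * r + 1"] by (simp add: C_def n)
  also have "\<dots> = (2 * r + 1) * a"
    using Suc_times_binomial_eq[of "2 * r" r] by (simp add: a_def mult.commute del: binomial_Suc_Suc)
  finally have C_rec: "(r + 1) * C = (2 * r + 1) * a" .
  have "(r + 1)^2 * (C^2 * (n + 1)) = 2 * ((r + 1) * C)^2 * (r + 1)"
    by (simp add: n power2_eq_square algebra_simps)
  also have "\<dots> = 2 * (a^2 * (2 * r + 1)) * ((2 * r + 1) * (r + 1))"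
    unfolding C_rec by (simp add: power2_eq_square algebra_simps)
  also have "\<dots> \<le> 2 * 16^r * ((r + 1)^2 * 2)"
    by (rule mult_mono)
      (use central_binomial_even_bound[of r] in \<open>simp_all add: a_def power2_eq_square algebra_simps\<close>)
  also have "\<dots> = (r + 1)^2 * 4 ^ n"
    by (simp add: n power_mult power_add)
  finally show ?thesis by (simp add: C_def)
qed

lemma power_le_exp_fact:
  fixes x :: real
  assumes "0 \<le> x"
  shows "x ^ n \<le> exp x * fact n"
proof -
  have "x ^ n / fact n \<le> (\<Sum>m. x ^ m / fact m)"
    using sum_le_suminf[OF summable_exp, of "{n}" x] assms by (simp add: divide_inverse mult.commute)
  then show ?thesis by (simp add: exp_def field_simps)
qed

lemma self_power_lt_fact: "1 \<le> n \<Longrightarrow> n ^ n < 4 ^ n * fact n"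
proof -
  assume "1 \<le> n"
  have "real n ^ n \<le> exp 1 ^ n * fact n"
    using power_le_exp_fact[of "real n" n] by (simp add: exp_of_nat_mult[symmetric])
  also have "\<dots> < 4 ^ n * fact n"
    using exp_le \<open>1 \<le> n\<close> by (intro mult_strict_right_mono power_strict_mono) auto
  finally have "real (n ^ n) < real (4 ^ n * fact n)" by simp
  then show ?thesis by linarith
qed

lemma prod_central_binomial_bound: "(\<Prod>m<n. m choose (m div 2))^2 * fact n \<le> (\<Prod>m<n. 2 ^ m :: nat)^2"
proof -
  have "(\<Prod>m<n. m choose (m div 2))^2 * fact n = (\<Prod>m<n. (m choose (m div 2))^2 * Suc m)"
    by (simp only: prod.distrib prod_power_distrib fact_prod_Suc atLeast0LessThan of_nat_id)
  also have "\<dots> \<le> (\<Prod>m<n. 4 ^ m)"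
    using central_binomial_bound by (intro prod_mono) simp
  also have "\<dots> = (\<Prod>m<n. 2 ^ m * 2 ^ m)"
    by (simp flip: power_mult_distrib)
  also have "\<dots> = (\<Prod>m<n. 2 ^ m)^2"
    by (simp add: prod.distrib power2_eq_square)
  finally show ?thesis .
qed

lemma prod_central_binomial_power_less:
  assumes "1 \<le> n" "(2 * c * 2 ^ t)^2 \<le> n"
  shows "(\<Prod>m<n. c * (m choose (m div 2))) * (2 ^ n) ^ t < (\<Prod>m<n. 2 ^ m)"
proof (rule ccontr)
  let ?N = "\<Prod>m<n. 2 ^ m :: nat"
  let ?P = "\<Prod>m<n. m choose (m div 2)"
  let ?x = "c * 2 ^ t"
  assume "\<not> ?thesis"
  then have "?N \<le> ?P * ?x ^ n"
    by (simp add: prod.distrib power_mult_distrib mult_ac flip: power_mult)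
  then have "?N^2 \<le> (?P * ?x ^ n)^2"
    by (rule power_mono) simp
  then have "?N^2 * fact n \<le> (?P^2 * fact n) * (?x ^ n)^2"
    by (simp add: power_mult_distrib mult_ac)
  also have "\<dots> \<le> ?N^2 * (?x ^ n)^2"
    using prod_central_binomial_bound[of n] by (rule mult_right_mono) simp
  finally have "fact n \<le> (?x ^ n)^2"
    by simp
  then have "4 ^ n * fact n \<le> ((2 * ?x) ^ 2) ^ n"
    by (simp add: power_mult_distrib mult_ac flip: power_mult)
  also have "\<dots> = ((2 * c * 2 ^ t)^2) ^ n"
    by (simp add: mult_ac)
  also have "\<dots> \<le> n ^ n"
    using assms(2) by (rule power_mono) simp
  also have "\<dots> < 4 ^ n * fact n"
    using assms(1) by (rule self_power_lt_fact)
  finally show False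
    by simp
qed

section \<open>Tournaments and degrees\<close>

lemma tournament_arcD: "tournament V A \<Longrightarrow> (u, v) \<in> A \<Longrightarrow> u \<in> V \<and> v \<in> V"
  unfolding tournament_def by blast

lemma tournament_irrefl: "tournament V A \<Longrightarrow> (v, v) \<notin> A"
  unfolding tournament_def by blast

lemma tournament_total:
  "tournament V A \<Longrightarrow> u \<in> V \<Longrightarrow> v \<in> V \<Longrightarrow> u \<noteq> v \<Longrightarrow> (u, v) \<in> A \<or> (v, u) \<in> A"
  unfolding tournament_def by blast

lemma tournament_asym: "tournament V A \<Longrightarrow> (u, v) \<in> A \<Longrightarrow> (v, u) \<notin> A"
  unfolding tournament_def by (metis mem_Sigma_iff subsetD)

lemma tournamentI:
  assumes "finite V" "\<And>u v. (u, v) \<in> A \<Longrightarrow> u \<in> V \<and> v \<in> V"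
    and "\<And>u v. u \<in> V \<Longrightarrow> v \<in> V \<Longrightarrow> u \<noteq> v \<Longrightarrow> (u, v) \<in> A \<or> (v, u) \<in> A"
    and "\<And>u v. (u, v) \<in> A \<Longrightarrow> (v, u) \<notin> A"
  shows "tournament V A"
proof -
  have "A \<subseteq> V \<times> V" "\<forall>v. (v, v) \<notin> A"
    using assms(2,4) by auto
  then show ?thesis
    unfolding tournament_def using assms(1,3,4) by blast
qed

lemma finite_tournaments: "finite V \<Longrightarrow> finite {A. tournament V A}"
  by (rule finite_subset[of _ "Pow (V \<times> V)"]) (auto simp: tournament_def)

definition outdeg :: "('a \<times> 'a) set \<Rightarrow> 'a \<Rightarrow> nat" where
  "outdeg A v = card {w. (v, w) \<in> A}"

definition indeg :: "('a \<times> 'a) set \<Rightarrow> 'a \<Rightarrow> nat" where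
  "indeg A v = card {u. (u, v) \<in> A}"

lemma outdeg_add_indeg:
  assumes A: "tournament V A" and v: "v \<in> V"
  shows "outdeg A v + indeg A v + 1 = card V"
proof -
  have V: "finite V"
    using A by (simp add: tournament_def)
  have "{w. (v, w) \<in> A} \<union> {u. (u, v) \<in> A} = V - {v}"
    using tournament_arcD[OF A] tournament_total[OF A] tournament_irrefl[OF A] v by blast
  moreover have "{w. (v, w) \<in> A} \<inter> {u. (u, v) \<in> A} = {}"
    using tournament_asym[OF A] by auto
  moreover have "finite {w. (v, w) \<in> A}" "finite {u. (u, v) \<in> A}"
    using tournament_arcD[OF A] by (auto intro: finite_subset[OF _ V])
  ultimately have "outdeg A v + indeg A v = card (V - {v})"
    unfolding outdeg_def indeg_def using card_Un_disjoint by metis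
  then show ?thesis
    using V v card_Suc_Diff1 by fastforce
qed

section \<open>Counting tournaments by out-degrees\<close>

definition add_vertex :: "(nat \<times> nat) set \<Rightarrow> nat set \<Rightarrow> nat \<Rightarrow> (nat \<times> nat) set" where
  "add_vertex A Q n = A \<union> Pair n ` Q \<union> (\<lambda>v. (v, n)) ` ({0..<n} - Q)"

lemma mem_add_vertex:
  "(u, v) \<in> add_vertex A Q n \<longleftrightarrow> (u, v) \<in> A \<or> (u = n \<and> v \<in> Q) \<or> (v = n \<and> u < n \<and> u \<notin> Q)"
  unfolding add_vertex_def by auto

lemma tournament_add_vertex:
  assumes A: "tournament {0..<n} A" and Q: "Q \<subseteq> {0..<n}"
  shows "tournament {0..<Suc n} (add_vertex A Q n)"
proof (rule tournamentI)
  show "u \<in> {0..<Suc n} \<and> v \<in> {0..<Suc n}" if "(u, v) \<in> add_vertex A Q n" for u v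
    using that tournament_arcD[OF A] Q unfolding mem_add_vertex by fastforce
  show "(u, v) \<in> add_vertex A Q n \<or> (v, u) \<in> add_vertex A Q n"
    if "u \<in> {0..<Suc n}" "v \<in> {0..<Suc n}" "u \<noteq> v" for u v
    using that tournament_total[OF A, of u v] unfolding mem_add_vertex by (auto simp: less_Suc_eq)
  show "(v, u) \<notin> add_vertex A Q n" if "(u, v) \<in> add_vertex A Q n" for u v
    using that tournament_asym[OF A, of u v] tournament_arcD[OF A] Q unfolding mem_add_vertex by fastforce
qed simp

lemma tournament_SucE:
  assumes B: "tournament {0..<Suc n} B"
  obtains A Q where "tournament {0..<n} A" "Q \<subseteq> {0..<n}" "B = add_vertex A Q n"
proof
  show "tournament {0..<n} (B \<inter> ({0..<n} \<times> {0..<n}))"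
    using tournament_total[OF B] tournament_asym[OF B] by (intro tournamentI) auto
  show "{v. (n, v) \<in> B} \<subseteq> {0..<n}"
    using tournament_arcD[OF B] tournament_irrefl[OF B] by (fastforce simp: less_Suc_eq)
  show "B = add_vertex (B \<inter> ({0..<n} \<times> {0..<n})) {v. (n, v) \<in> B} n"
  proof (rule set_eqI, clarify)
    fix u v
    show "(u, v) \<in> B \<longleftrightarrow> (u, v) \<in> add_vertex (B \<inter> ({0..<n} \<times> {0..<n})) {v. (n, v) \<in> B} n"
      using tournament_arcD[OF B, of u v] tournament_total[OF B, of u v] tournament_asym[OF B, of v u]
      unfolding mem_add_vertex by (auto simp: less_Suc_eq)
  qed
qed

lemma add_vertex_inj_on:
  "inj_on (\<lambda>(A, Q). add_vertex A Q n) ({A. tournament {0..<n} A} \<times> Pow {0..<n})"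
proof (rule inj_onI, clarsimp)
  fix A Q A' Q'
  assume A: "tournament {0..<n} A" and A': "tournament {0..<n} A'"
    and "Q \<subseteq> {0..<n}" "Q' \<subseteq> {0..<n}" and eq: "add_vertex A Q n = add_vertex A' Q' n"
  have "A = add_vertex A Q n \<inter> {0..<n} \<times> {0..<n}" "A' = add_vertex A' Q' n \<inter> {0..<n} \<times> {0..<n}"
    using tournament_arcD[OF A] tournament_arcD[OF A'] by (auto simp: mem_add_vertex)
  moreover have "Q = {v. (n, v) \<in> add_vertex A Q n}" "Q' = {v. (n, v) \<in> add_vertex A' Q' n}"
    using tournament_arcD[OF A] tournament_arcD[OF A'] by (auto simp: mem_add_vertex)
  ultimately show "A = A' \<and> Q = Q'"
    using eq by simp
qed

lemma card_tournaments: "card {A. tournament {0..<n} A} = (\<Prod>m<n. 2 ^ m)"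
proof (induction n)
  case 0
  have "{A. tournament {0..<0::nat} A} = {{}}"
    by (auto simp: tournament_def)
  then show ?case by simp
next
  case (Suc n)
  have "{B. tournament {0..<Suc n} B} =
      (\<lambda>(A, Q). add_vertex A Q n) ` ({A. tournament {0..<n} A} \<times> Pow {0..<n})"
    by (auto intro: tournament_add_vertex elim!: tournament_SucE)
  then show ?case
    using Suc.IH by (simp add: card_image[OF add_vertex_inj_on] card_cartesian_product card_Pow)
qed

lemma outdeg_add_vertex:
  assumes "tournament {0..<n} A" "v < n"
  shows "outdeg (add_vertex A Q n) v = outdeg A v + (if v \<in> Q then 0 else 1)"
proof -
  have "finite {w. (v, w) \<in> A}" "n \<notin> {w. (v, w) \<in> A}"
    using tournament_arcD[OF assms(1)] by (auto intro: finite_subset[of _ "{0..<n}"])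
  moreover have "{w. (v, w) \<in> add_vertex A Q n} = {w. (v, w) \<in> A} \<union> (if v \<in> Q then {} else {n})"
    using assms(2) unfolding mem_add_vertex by auto
  ultimately show ?thesis
    unfolding outdeg_def by auto
qed

lemma outdeg_add_vertex_new:
  assumes "tournament {0..<n} A"
  shows "outdeg (add_vertex A Q n) n = card Q"
proof -
  have "{w. (n, w) \<in> add_vertex A Q n} = Q"
    using tournament_arcD[OF assms] unfolding mem_add_vertex by auto
  then show ?thesis
    unfolding outdeg_def by simp
qed

lemma card_subsets_card_in:
  assumes "finite D"
  shows "card {Q. Q \<subseteq> {0..<n} \<and> card Q \<in> D} \<le> card D * (n choose (n div 2))"
proof -
  have "{Q. Q \<subseteq> {0..<n} \<and> card Q \<in> D} = (\<Union>d\<in>D. {Q. Q \<subseteq> {0..<n} \<and> card Q = d})"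
    by auto
  then have "card {Q. Q \<subseteq> {0..<n} \<and> card Q \<in> D} \<le> (\<Sum>d\<in>D. n choose d)"
    using card_UN_le[OF assms, of "\<lambda>d. {Q. Q \<subseteq> {0..<n} \<and> card Q = d}"] n_subsets[of "{0..<n}"]
    by simp
  also have "\<dots> \<le> (\<Sum>d\<in>D. n choose (n div 2))"
    by (intro sum_mono binomial_maximum)
  finally show ?thesis
    by simp
qed

definition tournaments_outdeg_in :: "nat \<Rightarrow> (nat \<Rightarrow> nat set) \<Rightarrow> (nat \<times> nat) set set" where
  "tournaments_outdeg_in n W = {A. tournament {0..<n} A \<and> (\<forall>v<n. outdeg A v \<in> W v)}"

lemma finite_tournaments_outdeg_in: "finite (tournaments_outdeg_in n W)"
  unfolding tournaments_outdeg_in_def by (rule finite_subset[OF _ finite_tournaments]) auto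

lemma tournaments_outdeg_in_Suc_subset:
  "tournaments_outdeg_in (Suc n) W \<subseteq> (\<lambda>(Q, A). add_vertex A Q n) `
     (SIGMA Q:{Q. Q \<subseteq> {0..<n} \<and> card Q \<in> W n}.
        tournaments_outdeg_in n (\<lambda>v. (\<lambda>d. d - (if v \<in> Q then 0 else 1)) ` W v))"
proof
  fix B
  assume "B \<in> tournaments_outdeg_in (Suc n) W"
  then have B: "tournament {0..<Suc n} B" and deg: "\<forall>v<Suc n. outdeg B v \<in> W v"
    by (auto simp: tournaments_outdeg_in_def)
  obtain A Q where A: "tournament {0..<n} A" and Q: "Q \<subseteq> {0..<n}" and BA: "B = add_vertex A Q n"
    using tournament_SucE[OF B] .
  have "card Q \<in> W n"
    using deg outdeg_add_vertex_new[OF A, of Q] by (auto simp: BA)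
  moreover have "outdeg A v \<in> (\<lambda>d. d - (if v \<in> Q then 0 else 1)) ` W v" if "v < n" for v
    using deg[rule_format, of v] outdeg_add_vertex[OF A that, of Q] that by (force simp: BA)
  ultimately show "B \<in> (\<lambda>(Q, A). add_vertex A Q n) ` (SIGMA Q:{Q. Q \<subseteq> {0..<n} \<and> card Q \<in> W n}.
      tournaments_outdeg_in n (\<lambda>v. (\<lambda>d. d - (if v \<in> Q then 0 else 1)) ` W v))"
    using A Q BA by (force simp: tournaments_outdeg_in_def)
qed

lemma card_tournaments_outdeg_in:
  assumes "\<And>v. finite (W v)" "\<And>v. card (W v) \<le> c"
  shows "card (tournaments_outdeg_in n W) \<le> (\<Prod>m<n. c * (m choose (m div 2)))"
  using assms
proof (induction n arbitrary: W)
  case 0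
  have "tournaments_outdeg_in 0 W \<subseteq> {{}}"
    by (auto simp: tournaments_outdeg_in_def tournament_def)
  then have "card (tournaments_outdeg_in 0 W) \<le> card {{}::(nat \<times> nat) set}"
    by (intro card_mono) auto
  then show ?case
    by simp
next
  case (Suc n)
  let ?P = "\<Prod>m<n. c * (m choose (m div 2))"
  define W' where "W' Q v = (\<lambda>d. d - (if v \<in> Q then 0 else 1)) ` W v" for Q v
  define QQ where "QQ = {Q. Q \<subseteq> {0..<n} \<and> card Q \<in> W n}"
  have IH: "card (tournaments_outdeg_in n (W' Q)) \<le> ?P" for Q
  proof (rule Suc.IH)
    show "finite (W' Q v)" for v
      using Suc.prems(1) by (simp add: W'_def)
    show "card (W' Q v) \<le> c" for v
      using card_image_le[OF Suc.prems(1)] Suc.prems(2) unfolding W'_def by (metis order_trans)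
  qed
  have fin: "finite (SIGMA Q:QQ. tournaments_outdeg_in n (W' Q))"
    by (simp add: QQ_def finite_tournaments_outdeg_in)
  have "card (tournaments_outdeg_in (Suc n) W) \<le>
      card ((\<lambda>(Q, A). add_vertex A Q n) ` (SIGMA Q:QQ. tournaments_outdeg_in n (W' Q)))"
    using tournaments_outdeg_in_Suc_subset[of n W] fin by (intro card_mono) (simp_all add: QQ_def W'_def[abs_def])
  also have "\<dots> \<le> card (SIGMA Q:QQ. tournaments_outdeg_in n (W' Q))"
    using fin by (rule card_image_le)
  also have "\<dots> = (\<Sum>Q\<in>QQ. card (tournaments_outdeg_in n (W' Q)))"
    by (simp add: QQ_def finite_tournaments_outdeg_in)
  also have "\<dots> \<le> card QQ * ?P"
    using sum_mono[of QQ _ "\<lambda>_. ?P", OF IH] by simp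
  also have "\<dots> \<le> c * (n choose (n div 2)) * ?P"
    using card_subsets_card_in[OF Suc.prems(1)[of n], of n] Suc.prems(2)[of n]
    by (intro mult_right_mono) (auto simp: QQ_def intro: order_trans)
  finally show ?case
    by (simp add: mult.commute)
qed

section \<open>Inversions\<close>

lemma mem_invert: "(x, y) \<in> invert A X \<longleftrightarrow> (if x \<in> X \<and> y \<in> X then (y, x) \<in> A else (x, y) \<in> A)"
  unfolding invert_def by auto

lemma invert_invert [simp]: "invert (invert A X) X = A"
  by (rule set_eqI, clarify) (simp add: mem_invert)

lemma invert_empty [simp]: "invert A {} = A"
  by (rule set_eqI, clarify) (simp add: mem_invert)

lemma foldl_invert_rev [simp]: "foldl invert (foldl invert A Xs) (rev Xs) = A"
  by (induction Xs arbitrary: A) simp_all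

lemma foldl_invert_replicate_empty [simp]: "foldl invert A (replicate m {}) = A"
  by (induction m) simp_all

lemma tournament_invert:
  assumes A: "tournament V A"
  shows "tournament V (invert A X)"
proof (rule tournamentI)
  show "finite V"
    using A by (simp add: tournament_def)
  show "u \<in> V \<and> v \<in> V" if "(u, v) \<in> invert A X" for u v
    using that tournament_arcD[OF A, of u v] tournament_arcD[OF A, of v u]
    by (auto simp: mem_invert split: if_splits)
  show "(u, v) \<in> invert A X \<or> (v, u) \<in> invert A X" if "u \<in> V" "v \<in> V" "u \<noteq> v" for u v
    using that tournament_total[OF A, of u v] by (auto simp: mem_invert)
  show "(v, u) \<notin> invert A X" if "(u, v) \<in> invert A X" for u v
    using that tournament_asym[OF A, of u v] tournament_asym[OF A, of v u]
    by (auto simp: mem_invert split: if_splits)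
qed

lemma tournament_foldl_invert: "tournament V A \<Longrightarrow> tournament V (foldl invert A Xs)"
  by (induction Xs arbitrary: A) (auto intro: tournament_invert)

lemma mem_foldl_invert_pairs:
  assumes "distinct Xs" "\<forall>X\<in>set Xs. card X = 2"
  shows "(x, y) \<in> foldl invert A Xs \<longleftrightarrow> (if {x, y} \<in> set Xs then (y, x) \<in> A else (x, y) \<in> A)"
  using assms
proof (induction Xs arbitrary: A)
  case Nil
  then show ?case by simp
next
  case (Cons X Xs)
  have "x \<in> X \<and> y \<in> X \<longleftrightarrow> X = {x, y} \<or> (x = y \<and> x \<in> X)"
    using Cons.prems(2) by (auto simp: card_2_iff)
  moreover have "{x, y} \<noteq> X" if "x = y"
    using Cons.prems(2) that by auto
  ultimately show ?case
    using Cons by (auto simp: mem_invert)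
qed

lemma tournament_inversions_between:
  assumes T: "tournament V T" and T': "tournament V T'"
  obtains Xs where "set Xs \<subseteq> Pow V" "foldl invert T Xs = T'"
proof -
  define D where "D = {{x, y} | x y. (x, y) \<in> T \<and> (y, x) \<in> T'}"
  have "D \<subseteq> Pow V"
    using tournament_arcD[OF T] by (auto simp: D_def)
  moreover have "finite V"
    using T by (simp add: tournament_def)
  ultimately obtain Xs where Xs: "set Xs = D" "distinct Xs"
    using finite_distinct_list[of D] finite_subset by (metis finite_Pow_iff)
  have "\<forall>X\<in>set Xs. card X = 2"
    using tournament_irrefl[OF T] by (fastforce simp: Xs D_def card_insert_if)
  have "(x, y) \<in> foldl invert T Xs \<longleftrightarrow> (x, y) \<in> T'" for x y
  proof (cases "{x, y} \<in> D")
    case True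
    then obtain a b where "{x, y} = {a, b}" "(a, b) \<in> T" "(b, a) \<in> T'"
      by (auto simp: D_def)
    then show ?thesis
      using mem_foldl_invert_pairs[OF Xs(2) \<open>\<forall>X\<in>set Xs. card X = 2\<close>] True
        tournament_asym[OF T] tournament_asym[OF T']
      by (auto simp: Xs doubleton_eq_iff)
  next
    case False
    then have "\<not> ((x, y) \<in> T \<and> (y, x) \<in> T')" "\<not> ((y, x) \<in> T \<and> (x, y) \<in> T')"
      by (auto simp: D_def insert_commute)
    moreover have "(x, y) \<in> T \<longleftrightarrow> (y, x) \<notin> T" "(x, y) \<in> T' \<longleftrightarrow> (y, x) \<notin> T'"
      if "(x, y) \<in> T \<or> (y, x) \<in> T \<or> (x, y) \<in> T' \<or> (y, x) \<in> T'"
      using that tournament_arcD[OF T] tournament_arcD[OF T'] tournament_irrefl[OF T]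
        tournament_total[OF T, of x y] tournament_total[OF T', of x y]
        tournament_asym[OF T, of x y] tournament_asym[OF T', of x y]
        tournament_asym[OF T, of y x] tournament_asym[OF T', of y x] tournament_irrefl[OF T']
      by blast+
    ultimately show ?thesis
      using mem_foldl_invert_pairs[OF Xs(2) \<open>\<forall>X\<in>set Xs. card X = 2\<close>] False
      by (auto simp: Xs)
  qed
  then have "foldl invert T Xs = T'"
    by auto
  then show ?thesis
    using that \<open>D \<subseteq> Pow V\<close> Xs by auto
qed

definition arc_strong_by_inversions :: "nat \<Rightarrow> 'a set \<Rightarrow> ('a \<times> 'a) set \<Rightarrow> nat \<Rightarrow> bool" where
  "arc_strong_by_inversions k V A m \<longleftrightarrow>
     (\<exists>Xs. length Xs = m \<and> set Xs \<subseteq> Pow V \<and> arc_strong k V (foldl invert A Xs))"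

lemma sinv'_eq_Least: "sinv' k V A = (LEAST m. arc_strong_by_inversions k V A m)"
  by (simp add: sinv'_def arc_strong_by_inversions_def)

lemma arc_strong_by_inversions_mono:
  assumes "arc_strong_by_inversions k V A m" "m \<le> l"
  shows "arc_strong_by_inversions k V A l"
proof -
  obtain Xs where "length Xs = m" "set Xs \<subseteq> Pow V" "arc_strong k V (foldl invert A Xs)"
    using assms(1) by (auto simp: arc_strong_by_inversions_def)
  then show ?thesis
    unfolding arc_strong_by_inversions_def using assms(2)
    by (intro exI[of _ "Xs @ replicate (l - m) {}"]) auto
qed

section \<open>Arc-strong tournaments\<close>

lemma arc_strong_imp_degree:
  assumes V: "finite V" "2 \<le> card V" and A: "A \<subseteq> V \<times> V"
    and strong: "arc_strong k V A" and v: "v \<in> V"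
  shows "k \<le> outdeg A v" "k \<le> indeg A v"
proof -
  have fin: "finite {w. (v, w) \<in> A}" "finite {u. (u, v) \<in> A}"
    using A by (auto intro: finite_subset[OF _ V(1)])
  have cut: "k \<le> card {(u, w) \<in> A. u \<in> S \<and> w \<in> V - S}" if "S \<subseteq> V" "S \<noteq> {}" "S \<noteq> V" for S
    using strong that unfolding arc_strong_def by blast
  have "{v} \<noteq> V"
    using V(2) by auto
  then have "k \<le> card {(u, w) \<in> A. u \<in> {v} \<and> w \<in> V - {v}}"
    using v by (intro cut) auto
  also have "\<dots> \<le> card (Pair v ` {w. (v, w) \<in> A})"
    using fin by (intro card_mono) auto
  also have "\<dots> \<le> outdeg A v"
    unfolding outdeg_def by (rule card_image_le[OF fin(1)])
  finally show "k \<le> outdeg A v" .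
  have "V - {v} \<noteq> {}" "V - {v} \<noteq> V"
    using \<open>{v} \<noteq> V\<close> v by auto
  then have "k \<le> card {(u, w) \<in> A. u \<in> V - {v} \<and> w \<in> V - (V - {v})}"
    by (intro cut) auto
  also have "\<dots> \<le> card ((\<lambda>u. (u, v)) ` {u. (u, v) \<in> A})"
    using fin v by (intro card_mono) auto
  also have "\<dots> \<le> indeg A v"
    unfolding indeg_def by (rule card_image_le[OF fin(2)])
  finally show "k \<le> indeg A v" .
qed

lemma card_tournament_inside:
  assumes A: "tournament V A" and S: "S \<subseteq> V"
  shows "2 * card (A \<inter> S \<times> S) + card S = card S * card S"
proof -
  have "finite S"
    using A S finite_subset by (auto simp: tournament_def)
  let ?I = "A \<inter> S \<times> S"
  let ?C = "prod.swap ` ?I"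
  let ?D = "(\<lambda>x. (x, x)) ` S"
  have "S \<times> S \<subseteq> (?I \<union> ?C) \<union> ?D"
  proof
    fix p
    assume "p \<in> S \<times> S"
    then obtain a b where p: "p = (a, b)" and ab: "a \<in> S" "b \<in> S"
      by blast
    consider "a = b" | "(a, b) \<in> A" | "(b, a) \<in> A"
      using tournament_total[OF A, of a b] S ab by blast
    then show "p \<in> (?I \<union> ?C) \<union> ?D"
      by cases (use p ab in \<open>auto intro: image_eqI[where x = "(b, a)"]\<close>)
  qed
  then have "S \<times> S = (?I \<union> ?C) \<union> ?D"
    by auto
  moreover have fin: "finite ?I" "finite ?C" "finite ?D"
    using \<open>finite S\<close> by (simp_all add: finite_Int)
  have "card (?I \<union> ?C) = card ?I + card ?C"
    using tournament_asym[OF A] fin by (intro card_Un_disjoint) auto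
  moreover have "card ((?I \<union> ?C) \<union> ?D) = card (?I \<union> ?C) + card ?D"
    using tournament_irrefl[OF A] fin by (intro card_Un_disjoint) auto
  moreover have "card ?C = card ?I" "card ?D = card S"
    by (auto intro!: card_image simp: inj_on_def)
  ultimately show ?thesis
    by (simp add: card_cartesian_product)
qed

lemma card_tournament_out_of:
  assumes A: "tournament V A" and S: "S \<subseteq> V"
  shows "card (A \<inter> S \<times> V) = (\<Sum>u\<in>S. outdeg A u)"
proof -
  have V: "finite V"
    using A by (simp add: tournament_def)
  have "A \<inter> S \<times> V = (SIGMA u:S. {w. (u, w) \<in> A})"
    using tournament_arcD[OF A] by auto
  moreover have "finite {w. (u, w) \<in> A}" for u
    using tournament_arcD[OF A] by (auto intro: finite_subset[OF _ V])
  ultimately show ?thesis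
    using S finite_subset[OF S V] by (simp add: outdeg_def)
qed

lemma card_arcs_leaving_small_set:
  assumes A: "tournament V A" and deg: "\<And>v. v \<in> V \<Longrightarrow> d \<le> outdeg A v"
    and S: "S \<subseteq> V" "S \<noteq> {}" "card S \<le> 2 * d"
  shows "d \<le> card {(u, w) \<in> A. u \<in> S \<and> w \<in> V - S}"
proof -
  have "finite S"
    using A S(1) finite_subset by (auto simp: tournament_def)
  have "{(u, w) \<in> A. u \<in> S \<and> w \<in> V - S} = A \<inter> S \<times> V - A \<inter> S \<times> S"
    using tournament_arcD[OF A] by auto
  moreover have "finite (A \<inter> S \<times> S)" "A \<inter> S \<times> S \<subseteq> A \<inter> S \<times> V"
    using \<open>finite S\<close> S(1) by (auto simp: finite_Int)
  ultimately have E: "card {(u, w) \<in> A. u \<in> S \<and> w \<in> V - S} = card (A \<inter> S \<times> V) - card (A \<inter> S \<times> S)"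
    by (simp only: card_Diff_subset)
  have "card S * d \<le> card (A \<inter> S \<times> V)"
    using card_tournament_out_of[OF A S(1)] sum_mono[of S "\<lambda>_. d" "outdeg A"] deg S(1) by auto
  moreover have "2 * card (A \<inter> S \<times> S) + card S = card S * card S"
    by (rule card_tournament_inside[OF A S(1)])
  moreover have "1 \<le> card S"
    using S(2) \<open>finite S\<close> by (simp add: Suc_le_eq card_gt_0_iff)
  moreover have "d \<le> out - inside"
    if "s * d \<le> out" "2 * inside + s = s * s" "1 \<le> s" "s \<le> 2 * d" for s out inside :: nat
  proof -
    have "0 \<le> (int s - 1) * (2 * int d - int s)"
      using that(3,4) by (intro mult_nonneg_nonneg) auto
    then have "2 * int d + int s * int s \<le> 2 * (int s * int d) + int s"
      by (simp add: algebra_simps)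
    moreover have "2 * int inside + int s = int s * int s" "int s * int d \<le> int out"
      using that(1,2) by (simp_all flip: of_nat_mult of_nat_add)
    ultimately show ?thesis
      by linarith
  qed
  ultimately show ?thesis
    using S(3) unfolding E by blast
qed

lemma arc_strong_if_min_degree:
  assumes A: "tournament V A"
    and deg: "\<And>v. v \<in> V \<Longrightarrow> d \<le> outdeg A v" "\<And>v. v \<in> V \<Longrightarrow> d \<le> indeg A v"
    and size: "card V \<le> 2 * d + 2" and "k \<le> d"
  shows "arc_strong k V A"
  unfolding arc_strong_def
proof (intro allI impI, elim conjE)
  fix S
  assume S: "S \<subseteq> V" "S \<noteq> {}" "S \<noteq> V"
  have V: "finite V"
    using A by (simp add: tournament_def)
  let ?E = "{(u, w) \<in> A. u \<in> S \<and> w \<in> V - S}"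
  have "d \<le> card ?E"
  proof (cases "card S \<le> 2 * d")
    case True
    then show ?thesis
      using card_arcs_leaving_small_set[OF A deg(1) S(1,2)] by blast
  next
    case False
    have "card (V - S) = card V - card S"
      using S(1) V finite_subset by (metis card_Diff_subset)
    moreover have "card S < card V"
      using S V by (meson psubset_card_mono psubsetI)
    ultimately have "card (V - S) = 1"
      using False size by linarith
    then obtain w where w: "V - S = {w}"
      by (rule card_1_singletonE)
    have "(\<lambda>u. (u, w)) ` {u. (u, w) \<in> A} \<subseteq> ?E"
      using w tournament_arcD[OF A] tournament_irrefl[OF A] by fastforce
    then have "card ((\<lambda>u. (u, w)) ` {u. (u, w) \<in> A}) \<le> card ?E"
      using V S(1) by (intro card_mono) (auto intro: finite_subset[of _ "V \<times> V"])
    moreover have "card ((\<lambda>u. (u, w)) ` {u. (u, w) \<in> A}) = indeg A w"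
      unfolding indeg_def by (rule card_image) (auto simp: inj_on_def)
    moreover have "w \<in> V"
      using w by blast
    ultimately show ?thesis
      using deg(2)[of w] by linarith
  qed
  then show "k \<le> card ?E"
    using \<open>k \<le> d\<close> by linarith
qed

definition interval_tournament :: "nat \<Rightarrow> nat \<Rightarrow> (nat \<times> nat) set" where
  "interval_tournament n h = {(i, j). i < n \<and> j < n \<and> (i < j \<and> j \<le> i + h \<or> j + h < i)}"

lemma tournament_interval_tournament: "tournament {0..<n} (interval_tournament n h)"
  by (rule tournamentI) (auto simp: interval_tournament_def)

lemma min_degree_interval_tournament:
  assumes "2 * h < n" "i < n"
  shows "h \<le> outdeg (interval_tournament n h) i" "h \<le> indeg (interval_tournament n h) i"
proof -
  have "{j. (i, j) \<in> interval_tournament n h} = {i<..<min n (Suc (i + h))} \<union> {..<i - h}"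
    using assms(2) by (auto simp: interval_tournament_def)
  moreover have "{i<..<min n (Suc (i + h))} \<inter> {..<i - h} = {}"
    by auto
  ultimately have "outdeg (interval_tournament n h) i = (min n (Suc (i + h)) - Suc i) + (i - h)"
    unfolding outdeg_def by (simp add: card_Un_disjoint)
  then show "h \<le> outdeg (interval_tournament n h) i"
    using assms by linarith
  have "{j. (j, i) \<in> interval_tournament n h} = {i - h..<i} \<union> {i + h<..<n}"
    using assms(2) by (auto simp: interval_tournament_def)
  moreover have "{i - h..<i} \<inter> {i + h<..<n} = {}"
    by auto
  ultimately have "indeg (interval_tournament n h) i = (i - (i - h)) + (n - Suc (i + h))"
    unfolding indeg_def by (simp add: card_Un_disjoint)
  then show "h \<le> indeg (interval_tournament n h) i"
    using assms by linarith
qed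

lemma arc_strong_interval_tournament:
  assumes "2 * k < n"
  shows "arc_strong k {0..<n} (interval_tournament n ((n - 1) div 2))"
proof (rule arc_strong_if_min_degree[OF tournament_interval_tournament])
  show "(n - 1) div 2 \<le> outdeg (interval_tournament n ((n - 1) div 2)) v"
    "(n - 1) div 2 \<le> indeg (interval_tournament n ((n - 1) div 2)) v" if "v \<in> {0..<n}" for v
    using that assms min_degree_interval_tournament[of "(n - 1) div 2" n v] by auto
  show "card {0..<n} \<le> 2 * ((n - 1) div 2) + 2" "k \<le> (n - 1) div 2"
    using assms by auto
qed

section \<open>Tournaments far from being arc-strong\<close>

lemma outdeg_window_if_arc_strong:
  assumes A: "tournament V A" and V: "card V = 2 * k + c" "1 \<le> k"
    and strong: "arc_strong k V A" and v: "v \<in> V"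
  shows "outdeg A v \<in> {k..<k + c}"
proof -
  have "finite V" "A \<subseteq> V \<times> V"
    using A by (auto simp: tournament_def)
  then have "k \<le> outdeg A v" "k \<le> indeg A v"
    using arc_strong_imp_degree[OF _ _ _ strong v] V by auto
  then show ?thesis
    using outdeg_add_indeg[OF A v] V by auto
qed

lemma card_arc_strong_by_inversions_le:
  assumes "1 \<le> k" and n: "n = 2 * k + c"
  shows "card {T. tournament {0..<n} T \<and> arc_strong_by_inversions k {0..<n} T t}
    \<le> card (tournaments_outdeg_in n (\<lambda>_. {k..<k + c})) * (2 ^ n) ^ t"
proof -
  define S where "S = tournaments_outdeg_in n (\<lambda>_. {k..<k + c})"
  define L where "L = {Xs. set Xs \<subseteq> Pow {0..<n} \<and> length Xs = t}"
  have "finite (S \<times> L)"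
    using finite_lists_length_eq[of "Pow {0..<n}" t] by (simp add: S_def L_def finite_tournaments_outdeg_in)
  have "{T. tournament {0..<n} T \<and> arc_strong_by_inversions k {0..<n} T t}
      \<subseteq> (\<lambda>(A, Xs). foldl invert A (rev Xs)) ` (S \<times> L)"
  proof clarify
    fix T
    assume T: "tournament {0..<n} T" and "arc_strong_by_inversions k {0..<n} T t"
    then obtain Xs where Xs: "Xs \<in> L" and strong: "arc_strong k {0..<n} (foldl invert T Xs)"
      unfolding L_def arc_strong_by_inversions_def by blast
    have "foldl invert T Xs \<in> S"
      using outdeg_window_if_arc_strong[OF tournament_foldl_invert[OF T] _ \<open>1 \<le> k\<close> strong]
        tournament_foldl_invert[OF T] by (auto simp: S_def n tournaments_outdeg_in_def)
    then show "T \<in> (\<lambda>(A, Xs). foldl invert A (rev Xs)) ` (S \<times> L)"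
      using Xs by (auto intro!: image_eqI[where x = "(foldl invert T Xs, Xs)"])
  qed
  then have "card {T. tournament {0..<n} T \<and> arc_strong_by_inversions k {0..<n} T t}
      \<le> card ((\<lambda>(A, Xs). foldl invert A (rev Xs)) ` (S \<times> L))"
    using \<open>finite (S \<times> L)\<close> by (intro card_mono finite_imageI)
  also have "\<dots> \<le> card (S \<times> L)"
    using \<open>finite (S \<times> L)\<close> by (rule card_image_le)
  also have "\<dots> = card S * (2 ^ n) ^ t"
    using card_lists_length_eq[of "Pow {0..<n}" t] by (simp add: L_def card_Pow card_cartesian_product)
  finally show ?thesis
    by (simp add: S_def)
qed

lemma exists_tournament_not_arc_strong_by_inversions:
  assumes "1 \<le> k" and small: "(2 * c * 2 ^ t)^2 \<le> 2 * k + c"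
  shows "\<exists>T. tournament {0..<2 * k + c} T \<and> \<not> arc_strong_by_inversions k {0..<2 * k + c} T t"
proof -
  define n where "n = 2 * k + c"
  have "card {T. tournament {0..<n} T \<and> arc_strong_by_inversions k {0..<n} T t}
      \<le> card (tournaments_outdeg_in n (\<lambda>_. {k..<k + c})) * (2 ^ n) ^ t"
    using card_arc_strong_by_inversions_le[OF \<open>1 \<le> k\<close> n_def] .
  also have "\<dots> \<le> (\<Prod>m<n. c * (m choose (m div 2))) * (2 ^ n) ^ t"
    by (intro mult_right_mono card_tournaments_outdeg_in) simp_all
  also have "\<dots> < card {T. tournament {0..<n} T}"
    using prod_central_binomial_power_less[of n c t] small \<open>1 \<le> k\<close> by (simp add: n_def card_tournaments)
  finally have "{T. tournament {0..<n} T \<and> arc_strong_by_inversions k {0..<n} T t} \<noteq> {T. tournament {0..<n} T}"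
    by auto
  then show ?thesis
    by (auto simp: n_def)
qed

lemma sinv'_greater:
  assumes T: "tournament {0..<n} T" and "2 * k < n"
    and "\<not> arc_strong_by_inversions k {0..<n} T t"
  shows "t < sinv' k {0..<n} T"
proof -
  \<comment> \<open>sinv' is a LEAST, so some number of inversions must be shown to work first.\<close>
  obtain Xs where "set Xs \<subseteq> Pow {0..<n}" "foldl invert T Xs = interval_tournament n ((n - 1) div 2)"
    using tournament_inversions_between[OF T tournament_interval_tournament] .
  then have "arc_strong_by_inversions k {0..<n} T (length Xs)"
    using arc_strong_interval_tournament[OF assms(2)] by (auto simp: arc_strong_by_inversions_def)
  then have "arc_strong_by_inversions k {0..<n} T (sinv' k {0..<n} T)"
    unfolding sinv'_eq_Least by (rule LeastI)
  then show ?thesis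
    using assms(3) arc_strong_by_inversions_mono not_less by blast
qed

lemma exists_tournament_sinv'_greater:
  assumes "1 \<le> k" "1 \<le> c" "(2 * c * 2 ^ t)^2 \<le> 2 * k + c"
  shows "\<exists>T. tournament {0..<2 * k + c} T \<and> t < sinv' k {0..<2 * k + c} T"
proof -
  have "2 * k < 2 * k + c"
    using assms(2) by simp
  then show ?thesis
    using exists_tournament_not_arc_strong_by_inversions[OF assms(1,3)] sinv'_greater by blast
qed

lemma square_le_if_log_bound:
  assumes "1 \<le> c" "1 \<le> n" "real t \<le> 1/2 * log 2 (real n) - log 2 (real (2 * c))"
  shows "(2 * c * 2 ^ t)^2 \<le> n"
proof -
  have "log 2 (real ((2 * c * 2 ^ t)^2)) = 2 * (log 2 (real (2 * c)) + real t)"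
    using assms(1) by (simp add: log_mult log_nat_power)
  also have "\<dots> \<le> log 2 (real n)"
    using assms(3) by simp
  finally have "real ((2 * c * 2 ^ t)^2) \<le> real n"
    using assms(1,2) by simp
  then show ?thesis
    by (simp only: of_nat_le_iff)
qed

lemma exists_tournament_sinv'_greater_log:
  assumes "1 \<le> k" "1 \<le> c"
  shows "\<exists>T. tournament {0..<2 * k + c} T \<and>
    real (sinv' k {0..<2 * k + c} T) > 1/2 * log 2 (real (2 * k + c)) - log 2 (real (2 * c))"
proof -
  define b where "b = 1/2 * log 2 (real (2 * k + c)) - log 2 (real (2 * c))"
  obtain T where "tournament {0..<2 * k + c} T" "b < real (sinv' k {0..<2 * k + c} T)"
  proof (cases "b < 0")
    case True
    then show ?thesis
      using that[OF tournament_interval_tournament] by simp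
  next
    case False
    define t where "t = nat \<lfloor>b\<rfloor>"
    have "(2 * c * 2 ^ t)^2 \<le> 2 * k + c"
      using False assms by (intro square_le_if_log_bound) (auto simp: b_def t_def)
    then obtain T where "tournament {0..<2 * k + c} T" "Suc t \<le> sinv' k {0..<2 * k + c} T"
      using exists_tournament_sinv'_greater assms Suc_le_eq by blast
    moreover have "b < real (Suc t)"
      using False by (simp add: t_def) linarith
    ultimately show ?thesis
      using that by (meson of_nat_le_iff order_less_le_trans)
  qed
  then show ?thesis
    by (auto simp: b_def)
qed

lemma sinv'_le_m': "tournament {0..<n} T \<Longrightarrow> sinv' k {0..<n} T \<le> m' k n"
  unfolding m'_def by (rule Max_ge) (auto simp: setcompr_eq_image intro: finite_tournaments)

theorem theorem5p7:
  shows "(\<forall>c::nat. c > 0 \<longrightarrow> (\<exists>K. \<forall>k\<ge>K. \<exists>T.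
            tournament {0..<2*k+c} T \<and>
            real (sinv' k {0..<2*k+c} T) > 1/2 * log 2 (real (2*k+c)) - log 2 (real (2*c))))
       \<and> (\<forall>c::nat. c > 0 \<longrightarrow> (\<forall>B::nat. \<exists>k. m' k (2*k+c) > B))"
proof (intro conjI allI impI)
  fix c :: nat
  assume "0 < c"
  then show "\<exists>K. \<forall>k\<ge>K. \<exists>T. tournament {0..<2*k+c} T \<and>
      real (sinv' k {0..<2*k+c} T) > 1/2 * log 2 (real (2*k+c)) - log 2 (real (2*c))"
    using exists_tournament_sinv'_greater_log by (intro exI[of _ 1]) auto
next
  fix c B :: nat
  assume "0 < c"
  define k where "k = (2 * c * 2 ^ B)^2"
  have "1 \<le> k"
    using \<open>0 < c\<close> by (simp add: k_def)
  then obtain T where "tournament {0..<2 * k + c} T" "B < sinv' k {0..<2 * k + c} T"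
    using exists_tournament_sinv'_greater[of k c B] \<open>0 < c\<close> by (auto simp: k_def)
  then show "\<exists>k. B < m' k (2 * k + c)"
    using sinv'_le_m' less_le_trans by blast
qed

end
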